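(* Let $q_1,\dots,q_\ell$ be as in the context and let $r_0\in(0,1)$ be such that for all $i,j$ with $\deg q_i>\deg q_j$ and all sufficiently large $N$, $\min_{N^{r_0}\le n,m\le N}\big(q_i(n,N)-q_j(m,N)\big)\ge N$. Then there exist constants $r_1\in(0,1)$, $c>0$, $A,B>0$, sets $B_N\supset[1,N^{r_0}]\cap\mathbb N$ with $|B_N|\le AN^{r_1}$, and, for each permutation $\varepsilon$ of $\{1,\dots,\ell\}$, finitely many numbers $0\le a_{j,\varepsilon}<b_{j,\varepsilon}\le1$ ($j=1,\dots,l_\varepsilon$), with the intervals $(a_{j,\varepsilon},b_{j,\varepsilon})$ pairwise disjoint over all $(j,\varepsilon)$, such that the sets $$I_\varepsilon(N)=\bigcup_{j=1}^{l_\varepsilon}\big(a_{j,\varepsilon}N+BN^{r_1},\,b_{j,\varepsilon}N-N^{r_1}\big)\cap\mathbb N$$ are pairwise disjoint, their union covers $([1,N]\cap\mathbb N)\setminus B_N$, and for all sufficiently large $N$ and all $n\in I_\varepsilon(N)$ with $n\ge N^{r_0}$: $$q_{\varepsilon(1)}(n,N)<q_{\varepsilon(2)}(n,N)<\dots<q_{\varepsilon(\ell)}(n,N),$$ and whenever $q_{\varepsilon(i)}$ and $q_{\varepsilon(i+1)}$ have the same degree and this degree is $>1$, $q_{\varepsilon(i+1)}(n,N)\ge q_{\varepsilon(i)}(n,N)+cN^{1/2}$.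
   Context: $q_1,\dots,q_\ell$ are polynomials in two variables $(n,N)$ with nonnegative integer coefficients, none of which depends only on $N$; the degree of a bivariate polynomial $p(x,y)$ is the degree of $p(x,x)$; $\deg q_i\le\deg q_{i+1}$; for $i\ne j$ the difference $q_i-q_j$ is not constant; each linear $q_i$ has the form $q_i(n,N)=a_in+b_iN$ with integers $a_i,b_i$. *)

theory Defs
  imports "HOL-Analysis.Analysis" "HOL-Combinatorics.Permutations"
          "HOL-Computational_Algebra.Polynomial"
begin

text \<open>A bivariate polynomial in (n,N) with nonnegative integer coefficients is
represented by its coefficient function: p i j is the coefficient of n^i N^j.
It must have finite support.\<close>
type_synonym bipoly = "nat \<Rightarrow> nat \<Rightarrow> nat"

definition bsupp :: "bipoly \<Rightarrow> (nat \<times> nat) set" where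
  "bsupp p = {(i,j). p i j \<noteq> 0}"

definition is_bipoly :: "bipoly \<Rightarrow> bool" where
  "is_bipoly p \<longleftrightarrow> finite (bsupp p)"

definition beval :: "bipoly \<Rightarrow> real \<Rightarrow> real \<Rightarrow> real" where
  "beval p x y = (\<Sum>(i,j)\<in>bsupp p. real (p i j) * x ^ i * y ^ j)"

definition bdiag :: "bipoly \<Rightarrow> int poly" where
  "bdiag p = (\<Sum>(i,j)\<in>bsupp p. monom (int (p i j)) (i + j))"

definition bdeg :: "bipoly \<Rightarrow> nat" where
  "bdeg p = degree (bdiag p)"

definition depends_only_on_N :: "bipoly \<Rightarrow> bool" where
  "depends_only_on_N p \<longleftrightarrow> (\<forall>(i,j)\<in>bsupp p. i = 0)"

definition bdiff_const :: "bipoly \<Rightarrow> bipoly \<Rightarrow> bool" where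
  "bdiff_const p q \<longleftrightarrow> (\<forall>i j. (i,j) \<noteq> (0,0) \<longrightarrow> p i j = q i j)"

end

theory Submission
  imports Defs "HOL-Real_Asymp.Real_Asymp" "HOL-Computational_Algebra.Fundamental_Theorem_Algebra"
begin

text \<open>
  For i \<noteq> j write q_j(n,N) - q_i(n,N) = N^d P(n/N) + O(N^(d-1)) on 0 \<le> n \<le> N, where the nonzero
  polynomial P is the top-degree part read as a function of t = n/N; d \<ge> 1 because the difference
  is not constant. Cut [0,1] at the real parts of the complex roots of all these P. Inside a piece
  (a,b), at distance N^r from aN and bN, each P(t) keeps its sign and is at least of order N^(-1/4)
  once r is close to 1, so each difference keeps its sign and exceeds \<surd>N. Sorting the q_i at one
  point of the piece therefore sorts them on the whole piece, with gaps \<surd>N. The remaining n lie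
  within N^r of a cut point.
\<close>

lemma poly_map_poly_of_real:
  "poly (map_poly of_real p) (of_real x) = (of_real (poly p x) :: 'a :: {real_algebra_1, comm_ring})"
  by (induction p) (auto simp: map_poly_pCons)

lemma poly_abs_ge_lead_coeff_dist_roots:
  fixes p :: "real poly"
  assumes "p \<noteq> 0" and "0 \<le> \<delta>"
    and far: "\<And>z. poly (map_poly complex_of_real p) z = 0 \<Longrightarrow> \<delta> \<le> \<bar>t - Re z\<bar>"
  shows "\<bar>lead_coeff p\<bar> * \<delta> ^ degree p \<le> \<bar>poly p t\<bar>"
proof -
  define P where "P = map_poly complex_of_real p"
  have degP: "degree P = degree p"
    unfolding P_def by (rule degree_map_poly) simp
  have lcP: "lead_coeff P = complex_of_real (lead_coeff p)"
    using degP unfolding P_def by (simp add: coeff_map_poly)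
  obtain root where R: "smult (lead_coeff P) (\<Prod>i<degree P. [:-root i, 1:]) = P"
    using complex_poly_decompose' by blast
  have root: "poly P (root k) = 0" if "k < degree P" for k
    using that by (subst R[symmetric]) (auto simp: poly_prod prod_zero_iff)
  have "complex_of_real (poly p t) = poly P (of_real t)"
    unfolding P_def by (simp add: poly_map_poly_of_real)
  also have "\<dots> = lead_coeff P * (\<Prod>k<degree P. of_real t - root k)"
    by (subst R[symmetric]) (simp add: poly_prod)
  finally have factored: "\<bar>poly p t\<bar> = \<bar>lead_coeff p\<bar> * (\<Prod>k<degree p. cmod (of_real t - root k))"
    using lcP degP by (metis norm_mult norm_of_real prod_norm)
  have "(\<Prod>k<degree p. \<delta>) \<le> (\<Prod>k<degree p. cmod (of_real t - root k))"
  proof (rule prod_mono)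
    fix k assume "k \<in> {..<degree p}"
    then have "\<delta> \<le> \<bar>t - Re (root k)\<bar>"
      using far root degP unfolding P_def by auto
    also have "\<dots> \<le> cmod (of_real t - root k)"
      using abs_Re_le_cmod[of "of_real t - root k"] by simp
    finally show "0 \<le> \<delta> \<and> \<delta> \<le> cmod (of_real t - root k)"
      using \<open>0 \<le> \<delta>\<close> by simp
  qed
  then show ?thesis
    unfolding factored by (simp add: mult_left_mono)
qed

lemma poly_sign_constant_on_root_free_interval:
  fixes p :: "real poly"
  assumes "\<And>t. a < t \<Longrightarrow> t < b \<Longrightarrow> poly p t \<noteq> 0"
  obtains s where "s \<in> {-1, 1}" "\<And>t. a < t \<Longrightarrow> t < b \<Longrightarrow> s * poly p t = \<bar>poly p t\<bar>"
proof (cases "a < b")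
  case False
  then show ?thesis
    using that[of 1] by auto
next
  case True
  define m where "m = (a + b) / 2"
  have m: "a < m" "m < b"
    using True unfolding m_def by auto
  have "sgn (poly p m) * poly p t = \<bar>poly p t\<bar>" if t: "a < t" "t < b" for t
  proof (rule ccontr)
    assume "sgn (poly p m) * poly p t \<noteq> \<bar>poly p t\<bar>"
    moreover have "poly p m \<noteq> 0" "poly p t \<noteq> 0"
      using assms m t by auto
    ultimately have "poly p (min m t) * poly p (max m t) < 0"
      by (cases "m \<le> t") (auto simp: sgn_if abs_if mult_less_0_iff split: if_splits)
    moreover from this have "min m t < max m t"
      using not_square_less_zero[of "poly p m"] by (cases "m = t") (auto simp: min_def max_def)
    ultimately obtain x where "min m t < x" "x < max m t" "poly p x = 0"
      using poly_IVT by blast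
    then show False
      using assms[of x] m t by auto
  qed
  moreover have "sgn (poly p m) \<in> {-1, 1}"
    using assms m by (auto simp: sgn_if)
  ultimately show ?thesis
    using that by blast
qed

lemma sum_monomials_homogeneous:
  fixes c :: "nat \<Rightarrow> nat \<Rightarrow> real"
  assumes "y \<noteq> 0" and "\<And>i j. (i, j) \<in> S \<Longrightarrow> i + j = d"
  shows "(\<Sum>(i, j)\<in>S. c i j * x ^ i * y ^ j) = y ^ d * poly (\<Sum>(i, j)\<in>S. monom (c i j) i) (x / y)"
  unfolding poly_sum sum_distrib_left
proof (intro sum.cong refl, clarify)
  fix i j assume "(i, j) \<in> S"
  then have "y ^ d = y ^ i * y ^ j"
    using assms(2) by (metis power_add)
  then show "c i j * x ^ i * y ^ j = y ^ d * poly (monom (c i j) i) (x / y)"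
    using assms(1) by (simp add: poly_monom power_divide)
qed

lemma sum_monomials_abs_le:
  fixes c :: "nat \<Rightarrow> nat \<Rightarrow> real"
  assumes "0 \<le> x" "x \<le> y" "1 \<le> y"
    and "\<And>i j. (i, j) \<in> S \<Longrightarrow> c i j \<noteq> 0 \<Longrightarrow> i + j \<le> e"
  shows "\<bar>\<Sum>(i, j)\<in>S. c i j * x ^ i * y ^ j\<bar> \<le> (\<Sum>(i, j)\<in>S. \<bar>c i j\<bar>) * y ^ e"
proof -
  have "\<bar>c i j * x ^ i * y ^ j\<bar> \<le> \<bar>c i j\<bar> * y ^ e" if "(i, j) \<in> S" for i j
  proof (cases "c i j = 0")
    case False
    have "x ^ i * y ^ j \<le> y ^ i * y ^ j"
      using assms by (intro mult_right_mono power_mono) auto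
    also have "\<dots> \<le> y ^ e"
      using assms False that by (simp add: power_add[symmetric] power_increasing)
    finally show ?thesis
      using assms by (simp add: abs_mult mult.assoc mult_left_mono)
  qed simp
  then have "\<bar>\<Sum>(i, j)\<in>S. c i j * x ^ i * y ^ j\<bar> \<le> (\<Sum>(i, j)\<in>S. \<bar>c i j\<bar> * y ^ e)"
    by (intro order_trans[OF sum_abs] sum_mono) auto
  then show ?thesis
    by (simp add: sum_distrib_right case_prod_beta)
qed

lemma sum_monomials_top_degree_decomposition:
  fixes c :: "nat \<Rightarrow> nat \<Rightarrow> real"
  assumes S: "finite S" and deg: "\<And>i j. (i, j) \<in> S \<Longrightarrow> i + j \<le> E"
    and nonconst: "(i\<^sub>0, j\<^sub>0) \<in> S" "(i\<^sub>0, j\<^sub>0) \<noteq> (0, 0)" "c i\<^sub>0 j\<^sub>0 \<noteq> 0"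
  shows "\<exists>d (P :: real poly) M. 1 \<le> d \<and> d \<le> E \<and> P \<noteq> 0 \<and> degree P \<le> d \<and>
    (\<forall>x y. 0 \<le> x \<longrightarrow> x \<le> y \<longrightarrow> 1 \<le> y \<longrightarrow>
       \<bar>(\<Sum>(i, j)\<in>S. c i j * x ^ i * y ^ j) - y ^ d * poly P (x / y)\<bar> \<le> M * y ^ (d - 1))"
proof -
  define T where "T = {(i, j) \<in> S. c i j \<noteq> 0}"
  have T: "finite T" "(i\<^sub>0, j\<^sub>0) \<in> T"
    using S nonconst unfolding T_def by (auto intro: rev_finite_subset)
  define d where "d = Max ((\<lambda>(i, j). i + j) ` T)"
  have le_d: "i + j \<le> d" if "(i, j) \<in> T" for i j
    unfolding d_def using T that by (intro Max_ge) force+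
  obtain i\<^sub>d j\<^sub>d where top: "(i\<^sub>d, j\<^sub>d) \<in> T" "i\<^sub>d + j\<^sub>d = d"
    using Max_in[of "(\<lambda>(i, j). i + j) ` T"] T unfolding d_def by fastforce
  have "1 \<le> d" "d \<le> E"
    using le_d[OF T(2)] nonconst(2) top deg unfolding T_def by auto
  define Sd where "Sd = {(i, j) \<in> S. i + j = d}"
  have "finite Sd"
    using S unfolding Sd_def by (auto intro: rev_finite_subset)
  define P :: "real poly" where "P = (\<Sum>(i, j)\<in>Sd. monom (c i j) i)"
  have "coeff P i\<^sub>d = (\<Sum>x\<in>Sd. if x = (i\<^sub>d, j\<^sub>d) then c i\<^sub>d j\<^sub>d else 0)"
    unfolding P_def coeff_sum
    by (intro sum.cong refl) (auto simp: Sd_def top(2)[symmetric] split: if_splits)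
  also have "\<dots> = c i\<^sub>d j\<^sub>d"
    using top \<open>finite Sd\<close> unfolding T_def by (subst sum.delta) (auto simp: Sd_def)
  finally have "P \<noteq> 0"
    using top unfolding T_def by auto
  have "degree P \<le> d"
    unfolding P_def using \<open>finite Sd\<close>
    by (intro degree_sum_le) (auto simp: Sd_def intro: order.trans[OF degree_monom_le])
  have below_d: "i + j \<le> d - 1" if "(i, j) \<in> S - Sd" "c i j \<noteq> 0" for i j
    using le_d[of i j] that unfolding T_def Sd_def by force
  have "\<bar>(\<Sum>(i, j)\<in>S. c i j * x ^ i * y ^ j) - y ^ d * poly P (x / y)\<bar> \<le> (\<Sum>(i, j)\<in>S - Sd. \<bar>c i j\<bar>) * y ^ (d - 1)"
    if "0 \<le> x" "x \<le> y" "1 \<le> y" for x y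
  proof -
    have "(\<Sum>(i, j)\<in>S. c i j * x ^ i * y ^ j)
        = (\<Sum>(i, j)\<in>S - Sd. c i j * x ^ i * y ^ j) + (\<Sum>(i, j)\<in>Sd. c i j * x ^ i * y ^ j)"
      using S by (intro sum.subset_diff) (auto simp: Sd_def)
    also have "(\<Sum>(i, j)\<in>Sd. c i j * x ^ i * y ^ j) = y ^ d * poly P (x / y)"
      unfolding P_def using that by (intro sum_monomials_homogeneous) (auto simp: Sd_def)
    finally have "(\<Sum>(i, j)\<in>S. c i j * x ^ i * y ^ j) - y ^ d * poly P (x / y)
        = (\<Sum>(i, j)\<in>S - Sd. c i j * x ^ i * y ^ j)"
      by simp
    then show ?thesis
      using sum_monomials_abs_le[where S = "S - Sd" and c = c and e = "d - 1", OF that below_d] by simp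
  qed
  then show ?thesis
    using \<open>1 \<le> d\<close> \<open>d \<le> E\<close> \<open>P \<noteq> 0\<close> \<open>degree P \<le> d\<close> by blast
qed

lemma dominant_term_sign:
  fixes y D p M lc s :: real
  assumes "1 \<le> d" "1 \<le> y" and dominant: "\<bar>D - y ^ d * p\<bar> \<le> M * y ^ (d - 1)"
    and s: "s \<in> {-1, 1}" "s * p = \<bar>p\<bar>" and lower: "lc * y powr (-1 / 4) \<le> \<bar>p\<bar>"
    and large: "M + sqrt y \<le> lc * y powr (3 / 4)"
  shows "sqrt y \<le> s * D"
proof -
  have y_d: "y ^ d = y ^ (d - 1) * y"
    using \<open>1 \<le> d\<close> by (metis Suc_diff_le diff_Suc_1 power_Suc2)
  have y34: "y * y powr (-1 / 4) = y powr (3 / 4)"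
    using \<open>1 \<le> y\<close> by (simp add: powr_add[symmetric] powr_mult_base)
  have "sqrt y \<le> y ^ (d - 1) * (lc * y powr (3 / 4) - M)"
  proof -
    have gap: "sqrt y \<le> lc * y powr (3 / 4) - M"
      using large by linarith
    have "1 \<le> y ^ (d - 1)"
      using \<open>1 \<le> y\<close> by simp
    moreover have "0 \<le> lc * y powr (3 / 4) - M"
      using gap real_sqrt_ge_zero[of y] \<open>1 \<le> y\<close> by linarith
    ultimately have "1 * (lc * y powr (3 / 4) - M) \<le> y ^ (d - 1) * (lc * y powr (3 / 4) - M)"
      by (rule mult_right_mono)
    with gap show ?thesis
      by simp
  qed
  also have "\<dots> = y ^ d * (lc * y powr (-1 / 4)) - M * y ^ (d - 1)"
    unfolding y_d y34[symmetric] by (simp add: algebra_simps)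
  also have "\<dots> \<le> y ^ d * \<bar>p\<bar> - \<bar>D - y ^ d * p\<bar>"
    using \<open>1 \<le> y\<close> lower dominant by (intro diff_mono mult_left_mono) auto
  also have "\<dots> \<le> s * (D - y ^ d * p) + y ^ d * (s * p)"
    using s(1) by (auto simp: s(2))
  also have "\<dots> = s * D"
    by (simp add: algebra_simps)
  finally show ?thesis .
qed

definition window :: "real \<Rightarrow> real \<Rightarrow> real \<Rightarrow> nat \<Rightarrow> nat set" where
  "window r a b N = {n. a * real N + real N powr r < real n \<and> real n < b * real N - real N powr r}"

lemma window_imp_interval:
  assumes "n \<in> window r a b N"
  shows "0 < N" "a < real n / real N" "real n / real N < b"
proof -
  have "a * real N + real N powr r < real n" "real n < b * real N - real N powr r"
    using assms unfolding window_def by auto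
  then have bounds: "a * real N < real n" "real n < b * real N"
    using powr_ge_zero[of "real N" r] by linarith+
  then show "0 < N"
    by (cases N) auto
  then show "a < real n / real N" "real n / real N < b"
    using bounds by (simp_all add: field_simps)
qed

lemma eventually_window_nonempty:
  assumes "0 \<le> a" "a < b" "0 \<le> r" "r < 1"
  shows "\<forall>\<^sub>F N in sequentially. window r a b N \<noteq> {}"
proof -
  have "\<forall>\<^sub>F N in sequentially. 4 / (b - a) \<le> real N powr (1 - r) \<and> 1 \<le> N"
    using assms by (intro eventually_conj) (real_asymp, simp add: eventually_ge_at_top)
  then show ?thesis
  proof (rule eventually_mono, clarify)
    fix N :: nat
    assume N: "4 / (b - a) \<le> real N powr (1 - r)" "1 \<le> N"
    have Nr: "1 \<le> real N powr r"
      using N(2) assms by (simp add: ge_one_powr_ge_zero)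
    have "4 * real N powr r \<le> (b - a) * real N powr (1 - r) * real N powr r"
      using N(1) assms Nr by (intro mult_right_mono) (auto simp: field_simps)
    also have "\<dots> = (b - a) * real N"
      using N(2) by (simp add: mult.assoc powr_add[symmetric])
    finally have gap: "a * real N + real N powr r + 1 < b * real N - real N powr r"
      using Nr by (simp add: algebra_simps)
    define x where "x = a * real N + real N powr r"
    have "0 \<le> x"
      unfolding x_def using assms by simp
    then have "real (nat \<lfloor>x\<rfloor> + 1) = real_of_int \<lfloor>x\<rfloor> + 1"
      by simp
    then have "nat \<lfloor>x\<rfloor> + 1 \<in> window r a b N"
      using gap unfolding window_def x_def[symmetric] by simp linarith
    then show "window r a b N = {} \<Longrightarrow> False"
      by blast
  qed
qed

lemma poly_abs_ge_on_window:
  fixes p :: "real poly"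
  assumes "p \<noteq> 0" and "n \<in> window r a b N"
    and roots: "\<And>z. poly (map_poly complex_of_real p) z = 0 \<Longrightarrow> Re z \<le> a \<or> b \<le> Re z"
    and r: "(1 - r) * real (degree p) \<le> 1 / 4"
  shows "\<bar>lead_coeff p\<bar> * real N powr (-1 / 4) \<le> \<bar>poly p (real n / real N)\<bar>"
proof -
  define t where "t = real n / real N"
  define \<delta> where "\<delta> = real N powr (r - 1)"
  have "0 < N"
    using window_imp_interval[OF assms(2)] by simp
  then have N1: "1 \<le> real N" and Nr: "real N powr r = \<delta> * real N"
    unfolding \<delta>_def by (simp_all add: powr_diff)
  have "(a + \<delta>) * real N < t * real N" "t * real N < (b - \<delta>) * real N"
    using assms(2) \<open>0 < N\<close> unfolding window_def t_def Nr by (auto simp: algebra_simps)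
  then have t: "a + \<delta> < t" "t < b - \<delta>"
    using \<open>0 < N\<close> by (simp_all add: mult_less_cancel_right)
  have "\<delta> \<le> \<bar>t - Re z\<bar>" if "poly (map_poly complex_of_real p) z = 0" for z
    using roots[OF that] t by auto
  then have "\<bar>lead_coeff p\<bar> * \<delta> ^ degree p \<le> \<bar>poly p t\<bar>"
    by (intro poly_abs_ge_lead_coeff_dist_roots[OF assms(1)]) (auto simp: \<delta>_def)
  moreover have "real N powr (-1 / 4) \<le> \<delta> ^ degree p"
  proof -
    have "\<delta> ^ degree p = real N powr ((r - 1) * real (degree p))"
      using \<open>0 < N\<close> by (simp add: \<delta>_def powr_realpow[symmetric] powr_powr)
    moreover have "-1 / 4 \<le> (r - 1) * real (degree p)"
      using r by (simp add: algebra_simps)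
    ultimately show ?thesis
      using N1 by (simp add: powr_mono)
  qed
  ultimately show ?thesis
    unfolding t_def by (meson abs_ge_zero mult_left_mono order_trans)
qed

lemma card_nat_near_le:
  fixes x h :: real
  assumes "0 \<le> h"
  shows "real (card {n::nat. \<bar>real n - x\<bar> \<le> h}) \<le> 2 * h + 1"
proof -
  define a where "a = nat \<lceil>x - h\<rceil>"
  define w where "w = nat \<lfloor>2 * h\<rfloor>"
  have "{n::nat. \<bar>real n - x\<bar> \<le> h} \<subseteq> {a..a + w}"
  proof
    fix n :: nat
    assume "n \<in> {n. \<bar>real n - x\<bar> \<le> h}"
    then have n: "x - h \<le> real n" "real n \<le> x + h"
      by auto
    then have "a \<le> n" "real n - real a \<le> 2 * h"
      unfolding a_def using real_nat_ceiling_ge[of "x - h"] by auto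
    then have "int n - int a \<le> \<lfloor>2 * h\<rfloor>"
      by (simp add: le_floor_iff)
    then show "n \<in> {a..a + w}"
      unfolding w_def using \<open>a \<le> n\<close> by auto
  qed
  then have "card {n::nat. \<bar>real n - x\<bar> \<le> h} \<le> w + 1"
    using card_mono[of "{a..a + w}"] by fastforce
  moreover have "real w \<le> 2 * h"
    unfolding w_def using assms by simp
  ultimately show ?thesis
    by linarith
qed

definition sign_separated :: "(nat \<Rightarrow> nat set) \<Rightarrow> (nat \<Rightarrow> nat \<Rightarrow> real) \<Rightarrow> bool" where
  "sign_separated W D \<longleftrightarrow> (\<exists>s\<in>{-1, 1}. \<forall>\<^sub>F N in sequentially. \<forall>n\<in>W N. sqrt (real N) \<le> s * D n N)"

definition sign_separated_off :: "real \<Rightarrow> real set \<Rightarrow> (nat \<Rightarrow> nat \<Rightarrow> real) \<Rightarrow> bool" where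
  "sign_separated_off \<rho> Z D \<longleftrightarrow>
     (\<forall>r a b. \<rho> \<le> r \<longrightarrow> b \<le> 1 \<longrightarrow> Z \<inter> {a<..<b} = {} \<longrightarrow> sign_separated (window r a b) D)"

lemma sign_separated_off_mono:
  assumes "sign_separated_off \<rho> Z D" "\<rho> \<le> \<rho>'" "Z \<subseteq> Z'"
  shows "sign_separated_off \<rho>' Z' D"
  unfolding sign_separated_off_def
proof (intro allI impI)
  fix r a b assume "\<rho>' \<le> r" "b \<le> 1" "Z' \<inter> {a<..<b} = {}"
  then show "sign_separated (window r a b) D"
    using assms unfolding sign_separated_off_def by (meson order_trans disjoint_iff subsetD)
qed

lemma sum_monomials_sign_separated:
  fixes c :: "nat \<Rightarrow> nat \<Rightarrow> real"
  assumes "finite S" and "\<And>i j. (i, j) \<in> S \<Longrightarrow> i + j \<le> E"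
    and "(i\<^sub>0, j\<^sub>0) \<in> S" "(i\<^sub>0, j\<^sub>0) \<noteq> (0, 0)" "c i\<^sub>0 j\<^sub>0 \<noteq> 0"
  shows "\<exists>Z. finite Z \<and>
           sign_separated_off (1 - 1 / (4 * real E)) Z (\<lambda>n N. \<Sum>(i, j)\<in>S. c i j * real n ^ i * real N ^ j)"
proof -
  obtain d and P :: "real poly" and M :: real where "1 \<le> d" "d \<le> E" "P \<noteq> 0" "degree P \<le> d"
    and dominant: "\<And>x y. 0 \<le> x \<Longrightarrow> x \<le> y \<Longrightarrow> 1 \<le> y \<Longrightarrow>
       \<bar>(\<Sum>(i, j)\<in>S. c i j * x ^ i * y ^ j) - y ^ d * poly P (x / y)\<bar> \<le> M * y ^ (d - 1)"
    using sum_monomials_top_degree_decomposition[of S E i\<^sub>0 j\<^sub>0 c, OF assms] by blast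
  define Z where "Z = Re ` {z. poly (map_poly complex_of_real P) z = 0}"
  have "finite Z"
    unfolding Z_def using \<open>P \<noteq> 0\<close> by (intro finite_imageI poly_roots_finite) (simp add: map_poly_eq_0_iff)
  have large: "\<forall>\<^sub>F N in sequentially. M + sqrt (real N) \<le> \<bar>lead_coeff P\<bar> * real N powr (3 / 4)"
    using \<open>P \<noteq> 0\<close> by real_asymp
  have "sign_separated (window r a b) (\<lambda>n N. \<Sum>(i, j)\<in>S. c i j * real n ^ i * real N ^ j)"
    if r: "1 - 1 / (4 * real E) \<le> r" and "b \<le> 1" and avoid: "Z \<inter> {a<..<b} = {}" for r a b
  proof -
    have roots: "Re z \<le> a \<or> b \<le> Re z" if "poly (map_poly complex_of_real P) z = 0" for z
      using avoid that unfolding Z_def by fastforce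
    have "poly P t \<noteq> 0" if "a < t" "t < b" for t
    proof
      assume "poly P t = 0"
      then have "poly (map_poly complex_of_real P) (of_real t) = 0"
        by (simp add: poly_map_poly_of_real)
      then show False
        using roots[of "of_real t"] that by simp
    qed
    then obtain s where s: "s \<in> {-1, 1}" "\<And>t. a < t \<Longrightarrow> t < b \<Longrightarrow> s * poly P t = \<bar>poly P t\<bar>"
      using poly_sign_constant_on_root_free_interval[of a b P] by metis
    have "(1 - r) * real (degree P) \<le> 1 / (4 * real E) * real E"
      using r \<open>degree P \<le> d\<close> \<open>d \<le> E\<close> by (intro mult_mono) auto
    then have r': "(1 - r) * real (degree P) \<le> 1 / 4"
      using \<open>1 \<le> d\<close> \<open>d \<le> E\<close> by simp
    have "sqrt (real N) \<le> s * (\<Sum>(i, j)\<in>S. c i j * real n ^ i * real N ^ j)"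
      if N: "M + sqrt (real N) \<le> \<bar>lead_coeff P\<bar> * real N powr (3 / 4)" and n: "n \<in> window r a b N" for N n
    proof -
      have "0 < N" "a < real n / real N" "real n / real N < b"
        using window_imp_interval[OF n] by auto
      then have "real n < b * real N"
        by (simp add: divide_less_eq)
      moreover have "b * real N \<le> real N"
        using mult_right_mono[OF \<open>b \<le> 1\<close> of_nat_0_le_iff[of N]] by simp
      ultimately have "real n \<le> real N" "1 \<le> real N"
        using \<open>0 < N\<close> by linarith+
      then show ?thesis
        using s(2)[of "real n / real N"] \<open>a < real n / real N\<close> \<open>real n / real N < b\<close>
        by (intro dominant_term_sign[OF \<open>1 \<le> d\<close> _ dominant s(1) _ poly_abs_ge_on_window[OF \<open>P \<noteq> 0\<close> n roots r'] N])
          auto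
    qed
    then show ?thesis
      unfolding sign_separated_def using s(1) by (intro bexI[of _ s] eventually_mono[OF large]) auto
  qed
  then show ?thesis
    using \<open>finite Z\<close> unfolding sign_separated_off_def by blast
qed

lemma beval_eq_sum_superset:
  assumes "finite S" "bsupp p \<subseteq> S"
  shows "beval p x y = (\<Sum>(i, j)\<in>S. real (p i j) * x ^ i * y ^ j)"
  unfolding beval_def using assms by (intro sum.mono_neutral_left) (auto simp: bsupp_def)

lemma beval_diff_sign_separated:
  assumes "is_bipoly p" "is_bipoly q" "\<not> bdiff_const p q"
    and deg: "\<And>i j. (i, j) \<in> bsupp p \<union> bsupp q \<Longrightarrow> i + j \<le> E"
  shows "\<exists>Z. finite Z \<and> sign_separated_off (1 - 1 / (4 * real E)) Z
           (\<lambda>n N. beval q (real n) (real N) - beval p (real n) (real N))"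
proof -
  define S where "S = bsupp p \<union> bsupp q"
  have "finite S"
    using assms(1,2) unfolding S_def is_bipoly_def by auto
  obtain i\<^sub>0 j\<^sub>0 where ij: "(i\<^sub>0, j\<^sub>0) \<noteq> (0, 0)" "p i\<^sub>0 j\<^sub>0 \<noteq> q i\<^sub>0 j\<^sub>0"
    using assms(3) unfolding bdiff_const_def by auto
  have "beval q x y - beval p x y = (\<Sum>(i, j)\<in>S. (real (q i j) - real (p i j)) * x ^ i * y ^ j)" for x y
    using beval_eq_sum_superset[OF \<open>finite S\<close>, of p] beval_eq_sum_superset[OF \<open>finite S\<close>, of q]
    by (simp add: S_def sum_subtractf[symmetric] case_prod_beta left_diff_distrib)
  moreover have "(i\<^sub>0, j\<^sub>0) \<in> S"
    using ij unfolding S_def bsupp_def by auto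
  ultimately show ?thesis
    using sum_monomials_sign_separated[OF \<open>finite S\<close> _ \<open>(i\<^sub>0, j\<^sub>0) \<in> S\<close> ij(1), of E
        "\<lambda>i j. real (q i j) - real (p i j)"] ij(2) deg
    unfolding S_def by auto
qed

lemma bipoly_family_sign_separated:
  fixes L :: nat and q :: "nat \<Rightarrow> bipoly"
  assumes poly: "\<And>i. i \<in> {1..L} \<Longrightarrow> is_bipoly (q i)"
    and nonconst: "\<And>i j. i \<in> {1..L} \<Longrightarrow> j \<in> {1..L} \<Longrightarrow> i \<noteq> j \<Longrightarrow> \<not> bdiff_const (q i) (q j)"
  shows "\<exists>\<rho><1. \<exists>Z. finite Z \<and> (\<forall>i\<in>{1..L}. \<forall>j\<in>{1..L}. i \<noteq> j \<longrightarrow>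
           sign_separated_off \<rho> Z (\<lambda>n N. beval (q j) (real n) (real N) - beval (q i) (real n) (real N)))"
proof -
  define U where "U = (\<Union>k\<in>{1..L}. bsupp (q k))"
  have "finite U"
    using poly unfolding U_def is_bipoly_def by auto
  define E where "E = Max (insert 1 ((\<lambda>(i, j). i + j) ` U))"
  have "1 \<le> E"
    unfolding E_def using \<open>finite U\<close> by (intro Max_ge) auto
  have deg: "i + j \<le> E" if "k \<in> {1..L}" "(i, j) \<in> bsupp (q k)" for i j k
    unfolding E_def using \<open>finite U\<close> that by (intro Max_ge) (force simp: U_def)+
  define \<rho> where "\<rho> = 1 - 1 / (4 * real E)"
  define D where "D i j n N = beval (q j) (real n) (real N) - beval (q i) (real n) (real N)" for i j n N
  have "\<exists>Z. finite Z \<and> sign_separated_off \<rho> Z (D i j)" if "i \<in> {1..L}" "j \<in> {1..L}" "i \<noteq> j" for i j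
    unfolding \<rho>_def D_def using that poly nonconst deg by (intro beval_diff_sign_separated) auto
  then obtain Zf where Zf: "\<And>i j. i \<in> {1..L} \<Longrightarrow> j \<in> {1..L} \<Longrightarrow> i \<noteq> j \<Longrightarrow>
      finite (Zf i j) \<and> sign_separated_off \<rho> (Zf i j) (D i j)"
    by metis
  define Z where "Z = (\<Union>i\<in>{1..L}. \<Union>j\<in>{1..L} - {i}. Zf i j)"
  have "finite Z"
    using Zf unfolding Z_def by auto
  moreover have "sign_separated_off \<rho> Z (D i j)" if "i \<in> {1..L}" "j \<in> {1..L}" "i \<noteq> j" for i j
  proof (rule sign_separated_off_mono[OF conjunct2[OF Zf[OF that]] order_refl])
    show "Zf i j \<subseteq> Z"
      using that unfolding Z_def by blast
  qed
  moreover have "\<rho> < 1"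
    using \<open>1 \<le> E\<close> unfolding \<rho>_def by simp
  ultimately show ?thesis
    unfolding D_def[abs_def] by blast
qed

lemma permutes_sorting:
  fixes v :: "nat \<Rightarrow> 'b :: linorder"
  assumes inj: "inj_on v {1..L}"
  obtains \<sigma> where "\<sigma> permutes {1..L}" "\<And>i. i \<in> {1..<L} \<Longrightarrow> v (\<sigma> i) < v (\<sigma> (i + 1))"
proof -
  define xs where "xs = sorted_list_of_set (v ` {1..L})"
  have len: "length xs = L"
    unfolding xs_def using inj by (simp add: card_image)
  have sorted: "sorted_wrt (<) xs" and "distinct xs"
    unfolding xs_def by (simp_all add: strict_sorted_iff)
  define \<sigma> where "\<sigma> i = (if i \<in> {1..L} then the_inv_into {1..L} v (xs ! (i - 1)) else i)" for i
  have \<sigma>: "\<sigma> i \<in> {1..L} \<and> v (\<sigma> i) = xs ! (i - 1)" if "i \<in> {1..L}" for i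
  proof -
    have "xs ! (i - 1) \<in> set xs"
      using that len by (intro nth_mem) auto
    then have "xs ! (i - 1) \<in> v ` {1..L}"
      unfolding xs_def by simp
    then obtain k where k: "k \<in> {1..L}" "v k = xs ! (i - 1)"
      by auto
    then have "the_inv_into {1..L} v (xs ! (i - 1)) = k"
      using inj by (metis the_inv_into_f_f)
    then show ?thesis
      using that k unfolding \<sigma>_def by simp
  qed
  have "inj_on \<sigma> {1..L}"
  proof (rule inj_onI)
    fix i j assume ij: "i \<in> {1..L}" "j \<in> {1..L}" "\<sigma> i = \<sigma> j"
    then have "xs ! (i - 1) = xs ! (j - 1)"
      using \<sigma>[of i] \<sigma>[of j] by simp
    then have "i - 1 = j - 1"
      using ij len by (subst (asm) nth_eq_iff_index_eq[OF \<open>distinct xs\<close>]) auto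
    then show "i = j"
      using ij by auto
  qed
  moreover have "\<sigma> ` {1..L} = {1..L}"
    using calculation \<sigma> by (intro endo_inj_surj) auto
  ultimately have "\<sigma> permutes {1..L}"
    by (intro bij_imp_permutes) (auto simp: bij_betw_def \<sigma>_def)
  moreover have "v (\<sigma> i) < v (\<sigma> (i + 1))" if "i \<in> {1..<L}" for i
  proof -
    have "xs ! (i - 1) < xs ! i"
      using that len by (intro sorted_wrt_nth_less[OF sorted]) auto
    then show ?thesis
      using \<sigma>[of i] \<sigma>[of "i + 1"] that by auto
  qed
  ultimately show ?thesis
    using that by blast
qed

lemma sign_separated_sorting_permutation:
  fixes f :: "nat \<Rightarrow> nat \<Rightarrow> nat \<Rightarrow> real" and W :: "nat \<Rightarrow> nat set"
  assumes sep: "\<And>i j. i \<in> {1..L} \<Longrightarrow> j \<in> {1..L} \<Longrightarrow> i \<noteq> j \<Longrightarrow>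
      sign_separated W (\<lambda>n N. f j n N - f i n N)"
    and nonempty: "\<forall>\<^sub>F N in sequentially. W N \<noteq> {}"
  obtains \<sigma> where "\<sigma> permutes {1..L}"
    "\<forall>\<^sub>F N in sequentially. \<forall>n\<in>W N. \<forall>i\<in>{1..<L}. sqrt (real N) \<le> f (\<sigma> (i + 1)) n N - f (\<sigma> i) n N"
proof -
  define P where "P = {(i, j). i \<in> {1..L} \<and> j \<in> {1..L} \<and> i \<noteq> j}"
  have "finite P"
    unfolding P_def by (rule finite_subset[of _ "{1..L} \<times> {1..L}"]) auto
  have "\<forall>p\<in>P. \<exists>s. s \<in> {-1, 1} \<and>
      (\<forall>\<^sub>F N in sequentially. \<forall>n\<in>W N. sqrt (real N) \<le> s * (f (snd p) n N - f (fst p) n N))"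
  proof
    fix p assume "p \<in> P"
    then obtain i j where "p = (i, j)" "i \<in> {1..L}" "j \<in> {1..L}" "i \<noteq> j"
      unfolding P_def by blast
    then show "\<exists>s. s \<in> {-1, 1} \<and>
        (\<forall>\<^sub>F N in sequentially. \<forall>n\<in>W N. sqrt (real N) \<le> s * (f (snd p) n N - f (fst p) n N))"
      using sep[of i j] unfolding sign_separated_def by auto
  qed
  then obtain sg where sg: "\<forall>p\<in>P. sg p \<in> {-1, 1} \<and>
      (\<forall>\<^sub>F N in sequentially. \<forall>n\<in>W N. sqrt (real N) \<le> sg p * (f (snd p) n N - f (fst p) n N))"
    by (rule bchoice[THEN exE]) blast
  have "\<forall>\<^sub>F N in sequentially. (\<forall>p\<in>P. \<forall>n\<in>W N. sqrt (real N) \<le> sg p * (f (snd p) n N - f (fst p) n N))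
      \<and> W N \<noteq> {} \<and> 0 < N"
    using sg \<open>finite P\<close> nonempty
    by (intro eventually_conj eventually_ball_finite) (auto simp: eventually_gt_at_top)
  then obtain N\<^sub>0 where N\<^sub>0: "\<And>N. N \<ge> N\<^sub>0 \<Longrightarrow>
      (\<forall>p\<in>P. \<forall>n\<in>W N. sqrt (real N) \<le> sg p * (f (snd p) n N - f (fst p) n N)) \<and> W N \<noteq> {} \<and> 0 < N"
    unfolding eventually_sequentially by blast
  then obtain n\<^sub>0 where "n\<^sub>0 \<in> W N\<^sub>0"
    by blast
  \<comment> \<open>Sort the values at one sample point; the eventual signs then force the same order everywhere.\<close>
  define v where "v i = f i n\<^sub>0 N\<^sub>0" for i
  have v_gap: "0 < sg p * (v (snd p) - v (fst p))" if "p \<in> P" for p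
  proof -
    have "sqrt (real N\<^sub>0) \<le> sg p * (v (snd p) - v (fst p))" "0 < sqrt (real N\<^sub>0)"
      using N\<^sub>0[of N\<^sub>0] \<open>n\<^sub>0 \<in> W N\<^sub>0\<close> that unfolding v_def by auto
    then show ?thesis
      by linarith
  qed
  have "inj_on v {1..L}"
  proof (rule inj_onI, rule ccontr)
    fix i j assume "i \<in> {1..L}" "j \<in> {1..L}" "v i = v j" "i \<noteq> j"
    then show False
      using v_gap[of "(i, j)"] unfolding P_def by simp
  qed
  then obtain \<sigma> where \<sigma>: "\<sigma> permutes {1..L}" "\<And>i. i \<in> {1..<L} \<Longrightarrow> v (\<sigma> i) < v (\<sigma> (i + 1))"
    using permutes_sorting by blast
  have "sqrt (real N) \<le> f (\<sigma> (i + 1)) n N - f (\<sigma> i) n N"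
    if N: "N \<ge> N\<^sub>0" and n: "n \<in> W N" and i: "i \<in> {1..<L}" for N n i
  proof -
    define p where "p = (\<sigma> i, \<sigma> (i + 1))"
    have "\<sigma> i \<noteq> \<sigma> (i + 1)"
      using permutes_inj[OF \<sigma>(1)] by (simp add: inj_eq)
    then have "p \<in> P"
      using i permutes_in_image[OF \<sigma>(1)] unfolding P_def p_def by auto
    moreover have "sg p = 1"
    proof -
      have "sg p \<in> {-1, 1}" "0 < sg p * (v (\<sigma> (i + 1)) - v (\<sigma> i))"
        using sg v_gap \<open>p \<in> P\<close> unfolding p_def by auto
      then show ?thesis
        using \<sigma>(2)[OF i] by auto
    qed
    ultimately show ?thesis
      using N\<^sub>0[OF N] n unfolding p_def by auto
  qed
  then have "\<forall>\<^sub>F N in sequentially. \<forall>n\<in>W N. \<forall>i\<in>{1..<L}.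
      sqrt (real N) \<le> f (\<sigma> (i + 1)) n N - f (\<sigma> i) n N"
    unfolding eventually_sequentially by blast
  with \<sigma>(1) show ?thesis
    by (rule that)
qed

lemma enumerate_fibres:
  fixes g :: "nat \<Rightarrow> 'a"
  shows "\<exists>(l :: 'a \<Rightarrow> nat) e. (\<forall>x. \<forall>j\<in>{1..l x}. e x j < K \<and> g (e x j) = x) \<and> (\<forall>x. inj_on (e x) {1..l x}) \<and>
           (\<forall>k<K. \<exists>j\<in>{1..l (g k)}. e (g k) j = k)"
proof -
  define xs where "xs x = filter (\<lambda>k. g k = x) [0..<K]" for x
  have "xs x ! (j - 1) < K \<and> g (xs x ! (j - 1)) = x" if "j \<in> {1..length (xs x)}" for x j
  proof -
    have "xs x ! (j - 1) \<in> set (xs x)"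
      using that by (intro nth_mem) auto
    then show ?thesis
      unfolding xs_def by auto
  qed
  moreover have "inj_on (\<lambda>j. xs x ! (j - 1)) {1..length (xs x)}" for x
    unfolding xs_def by (rule inj_onI) (auto simp: nth_eq_iff_index_eq)
  moreover have "\<exists>j\<in>{1..length (xs (g k))}. xs (g k) ! (j - 1) = k" if "k < K" for k
  proof -
    have "k \<in> set (xs (g k))"
      unfolding xs_def using that by simp
    then obtain m where "m < length (xs (g k))" "xs (g k) ! m = k"
      by (metis in_set_conv_nth)
    then show ?thesis
      by (intro bexI[of _ "m + 1"]) auto
  qed
  ultimately show ?thesis
    by (intro exI[of _ "\<lambda>x. length (xs x)"] exI[of _ "\<lambda>x j. xs x ! (j - 1)"]) simp
qed

locale unit_interval_partition =
  fixes K :: nat and p :: "nat \<Rightarrow> real"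
  assumes strict_mono: "strict_mono_on {..K} p" and first: "p 0 = 0" and last: "p K = 1"
begin

lemma p_mono: "k \<le> k' \<Longrightarrow> k' \<le> K \<Longrightarrow> p k \<le> p k'"
  using strict_mono_on_leD[OF strict_mono] by simp

lemma p_bounds: "k \<le> K \<Longrightarrow> 0 \<le> p k \<and> p k \<le> 1"
  using p_mono[of 0 k] p_mono[of k K] first last by simp

lemma p_Suc_le: "k < k' \<Longrightarrow> k' \<le> K \<Longrightarrow> p (Suc k) \<le> p k'"
  using p_mono by simp

lemma p_less_Suc: "k < K \<Longrightarrow> p k < p (Suc k)"
  using strict_mono_onD[OF strict_mono] by simp

lemma intervals_disjoint:
  assumes "k < K" "k' < K" "k \<noteq> k'"
  shows "{p k<..<p (Suc k)} \<inter> {p k'<..<p (Suc k')} = {}"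
  using p_Suc_le[of k k'] p_Suc_le[of k' k] assms by (cases "k < k'") auto

lemma windows_disjoint:
  assumes "k < K" "k' < K" "k \<noteq> k'"
  shows "window r (p k) (p (Suc k)) N \<inter> window r (p k') (p (Suc k')) N = {}"
proof (rule equals0I)
  fix n assume "n \<in> window r (p k) (p (Suc k)) N \<inter> window r (p k') (p (Suc k')) N"
  then have "real n / real N \<in> {p k<..<p (Suc k)} \<inter> {p k'<..<p (Suc k')}"
    using window_imp_interval by auto
  then show False
    using intervals_disjoint[OF assms] by blast
qed

lemma uncovered_near_breakpoint:
  assumes "0 < N" "n \<le> N" and uncovered: "\<And>k. k < K \<Longrightarrow> n \<notin> window r (p k) (p (Suc k)) N"
  shows "\<exists>m\<le>K. \<bar>real n - p m * real N\<bar> \<le> real N powr r"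
proof -
  define t where "t = real n / real N"
  have n: "real n = t * real N" "0 \<le> t" "t \<le> 1"
    using assms unfolding t_def by auto
  define k where "k = Max {m. m \<le> K \<and> p m \<le> t}"
  have fin: "finite {m. m \<le> K \<and> p m \<le> t}"
    by simp
  have "0 \<in> {m. m \<le> K \<and> p m \<le> t}"
    using first n by simp
  then have "k \<in> {m. m \<le> K \<and> p m \<le> t}"
    unfolding k_def by (intro Max_in[OF fin]) auto
  then have k: "k \<le> K" "p k \<le> t"
    by auto
  have above: "m \<le> k" if "m \<le> K" "p m \<le> t" for m
    unfolding k_def using that by (intro Max_ge[OF fin]) auto
  show ?thesis
  proof (cases "k = K")
    case True
    then show ?thesis
      using k last n by (intro exI[of _ K]) auto
  next
    case False
    then have "k < K" "t < p (Suc k)"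
      using k above[of "Suc k"] by force+
    then have "p k * real N \<le> real n" "real n < p (Suc k) * real N"
      using k n \<open>0 < N\<close> by (simp_all add: mult_right_mono)
    moreover have "\<not> (p k * real N + real N powr r < real n \<and> real n < p (Suc k) * real N - real N powr r)"
      using uncovered[OF \<open>k < K\<close>] unfolding window_def by simp
    ultimately consider "\<bar>real n - p k * real N\<bar> \<le> real N powr r"
      | "\<bar>real n - p (Suc k) * real N\<bar> \<le> real N powr r"
      by linarith
    then show ?thesis
      using \<open>k < K\<close> by cases (auto intro: exI[of _ k] exI[of _ "Suc k"])
  qed
qed

lemma card_uncovered_le:
  assumes "1 \<le> N" "0 \<le> r"
  shows "real (card ({1..N} - (\<Union>k<K. window r (p k) (p (Suc k)) N))) \<le> 3 * real (K + 1) * real N powr r"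
proof -
  define near where "near m = {n::nat. \<bar>real n - p m * real N\<bar> \<le> real N powr r}" for m
  define uncovered where "uncovered = {1..N} - (\<Union>k<K. window r (p k) (p (Suc k)) N)"
  have "uncovered \<subseteq> (\<Union>m\<le>K. near m)"
  proof
    fix n assume "n \<in> uncovered"
    then have "n \<le> N" "\<And>k. k < K \<Longrightarrow> n \<notin> window r (p k) (p (Suc k)) N"
      unfolding uncovered_def by auto
    then obtain m where "m \<le> K" "\<bar>real n - p m * real N\<bar> \<le> real N powr r"
      using uncovered_near_breakpoint[of N n r] assms(1) by auto
    then show "n \<in> (\<Union>m\<le>K. near m)"
      unfolding near_def by auto
  qed
  moreover have "finite (near m)" for m
    unfolding near_def by (rule finite_subset[of _ "{..nat \<lceil>p m * real N + real N powr r\<rceil>}"])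
      (auto simp: le_nat_iff le_ceiling_iff abs_le_iff)
  ultimately have "card uncovered \<le> (\<Sum>m\<le>K. card (near m))"
    by (intro order_trans[OF card_mono card_UN_le]) auto
  then have "real (card uncovered) \<le> (\<Sum>m\<le>K. real (card (near m)))"
    by (metis of_nat_le_iff of_nat_sum)
  also have "\<dots> \<le> (\<Sum>m\<le>K. 2 * real N powr r + 1)"
    unfolding near_def by (intro sum_mono card_nat_near_le) simp
  also have "\<dots> \<le> (\<Sum>m\<le>K. 3 * real N powr r)"
    using assms by (intro sum_mono) (simp add: ge_one_powr_ge_zero)
  finally show ?thesis
    unfolding uncovered_def by (simp add: algebra_simps)
qed

lemma small_points_uncovered:
  assumes "1 \<le> N" "r' \<le> r" "r' \<le> 1"
  shows "{n. 1 \<le> n \<and> real n \<le> real N powr r'} \<subseteq> {1..N} - (\<Union>k<K. window r (p k) (p (Suc k)) N)"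
proof
  fix n assume n: "n \<in> {n. 1 \<le> n \<and> real n \<le> real N powr r'}"
  have "real N powr r' \<le> real N powr r" "real N powr r' \<le> real N"
    using assms powr_mono[of r' 1 "real N"] by (auto intro: powr_mono)
  moreover have "real N powr r < real n" if "n \<in> window r (p k) (p (Suc k)) N" "k < K" for k
  proof -
    have "0 \<le> p k * real N"
      using p_bounds[of k] that(2) by simp
    then show ?thesis
      using that(1) unfolding window_def by auto
  qed
  ultimately show "n \<in> {1..N} - (\<Union>k<K. window r (p k) (p (Suc k)) N)"
    using n by force
qed

lemma sorting_permutations:
  fixes f :: "nat \<Rightarrow> nat \<Rightarrow> nat \<Rightarrow> real"
  assumes sep: "\<And>i j. i \<in> {1..L} \<Longrightarrow> j \<in> {1..L} \<Longrightarrow> i \<noteq> j \<Longrightarrow>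
      sign_separated_off \<rho> Z (\<lambda>n N. f j n N - f i n N)"
    and avoid: "\<And>k. k < K \<Longrightarrow> Z \<inter> {p k<..<p (Suc k)} = {}" and r: "\<rho> \<le> r" "0 \<le> r" "r < 1"
  shows "\<exists>\<sigma>s. \<forall>k<K. \<sigma>s k permutes {1..L} \<and> (\<forall>\<^sub>F N in sequentially. \<forall>n\<in>window r (p k) (p (Suc k)) N.
           \<forall>i\<in>{1..<L}. sqrt (real N) \<le> f (\<sigma>s k (i + 1)) n N - f (\<sigma>s k i) n N)"
proof -
  have "\<exists>\<sigma>. k < K \<longrightarrow> \<sigma> permutes {1..L} \<and> (\<forall>\<^sub>F N in sequentially. \<forall>n\<in>window r (p k) (p (Suc k)) N.
      \<forall>i\<in>{1..<L}. sqrt (real N) \<le> f (\<sigma> (i + 1)) n N - f (\<sigma> i) n N)" for k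
  proof (cases "k < K")
    case True
    have pair: "sign_separated (window r (p k) (p (Suc k))) (\<lambda>n N. f j n N - f i n N)"
      if "i \<in> {1..L}" "j \<in> {1..L}" "i \<noteq> j" for i j
      using sep[OF that] avoid[OF True] p_bounds[of "Suc k"] True r unfolding sign_separated_off_def by simp
    have "\<forall>\<^sub>F N in sequentially. window r (p k) (p (Suc k)) N \<noteq> {}"
      using p_bounds[of k] p_less_Suc[OF True] True r by (intro eventually_window_nonempty) auto
    then show ?thesis
      using sign_separated_sorting_permutation[of L "window r (p k) (p (Suc k))" f, OF pair] by blast
  qed simp
  then have "\<forall>k. \<exists>\<sigma>. k < K \<longrightarrow> \<sigma> permutes {1..L} \<and> (\<forall>\<^sub>F N in sequentially. \<forall>n\<in>window r (p k) (p (Suc k)) N.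
      \<forall>i\<in>{1..<L}. sqrt (real N) \<le> f (\<sigma> (i + 1)) n N - f (\<sigma> i) n N)"
    by blast
  then show ?thesis
    by (rule choice)
qed

end

lemma obtain_unit_interval_partition:
  fixes Z :: "real set"
  assumes "finite Z"
  obtains K p where "unit_interval_partition K p" "\<And>k. k < K \<Longrightarrow> Z \<inter> {p k<..<p (Suc k)} = {}"
proof -
  define ps where "ps = sorted_list_of_set ({0, 1} \<union> Z \<inter> {0..1})"
  define K where "K = length ps - 1"
  have set_ps: "set ps = {0, 1} \<union> Z \<inter> {0..1}"
    unfolding ps_def by (rule set_sorted_list_of_set) (use assms in auto)
  have sorted: "sorted_wrt (<) ps"
    unfolding ps_def by (simp add: strict_sorted_iff)
  have "length ps \<noteq> 0"
    using set_ps by auto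
  then have len: "length ps = Suc K"
    unfolding K_def by simp
  have less: "ps ! k < ps ! k'" if "k < k'" "k' \<le> K" for k k'
    using that len by (intro sorted_wrt_nth_less[OF sorted]) auto
  have less_iff: "ps ! k < ps ! k' \<longleftrightarrow> k < k'" if "k \<le> K" "k' \<le> K" for k k'
    using less[of k k'] less[of k' k] that by (cases k k' rule: linorder_cases) auto
  have in01: "0 \<le> ps ! k \<and> ps ! k \<le> 1" if "k \<le> K" for k
    using nth_mem[of k ps] that len set_ps by auto
  have index: "\<exists>m\<le>K. ps ! m = x" if "x \<in> set ps" for x
    using that len by (metis in_set_conv_nth less_Suc_eq_le)
  have "ps ! 0 = 0"
  proof -
    obtain m where "m \<le> K" "ps ! m = 0"
      using index[of 0] set_ps by auto
    then show ?thesis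
      using less_iff[of 0 m] in01[of 0] by (cases "m = 0") auto
  qed
  moreover have "ps ! K = 1"
  proof -
    obtain m where "m \<le> K" "ps ! m = 1"
      using index[of 1] set_ps by auto
    then show ?thesis
      using less_iff[of m K] in01[of K] by (cases "m = K") auto
  qed
  moreover have "strict_mono_on {..K} (\<lambda>k. ps ! k)"
    using less_iff by (intro strict_mono_onI) auto
  ultimately have "unit_interval_partition K (\<lambda>k. ps ! k)"
    by unfold_locales
  moreover have "Z \<inter> {ps ! k<..<ps ! Suc k} = {}" if "k < K" for k
  proof (rule ccontr)
    assume "Z \<inter> {ps ! k<..<ps ! Suc k} \<noteq> {}"
    then obtain z where z: "z \<in> Z" "ps ! k < z" "z < ps ! Suc k"
      by auto
    then have "z \<in> set ps"
      using in01[of k] in01[of "Suc k"] that set_ps by auto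
    then obtain m where "m \<le> K" "ps ! m = z"
      using index by blast
    then show False
      using z less_iff[of k m] less_iff[of m "Suc k"] that by auto
  qed
  ultimately show ?thesis
    using that by blast
qed

theorem mainTheorem12:
  fixes L :: nat and q :: "nat \<Rightarrow> bipoly" and r\<^sub>0 :: real
  assumes poly: "\<And>i. i \<in> {1..L} \<Longrightarrow> is_bipoly (q i)"
    and notN: "\<And>i. i \<in> {1..L} \<Longrightarrow> \<not> depends_only_on_N (q i)"
    and degmono: "\<And>i. i \<in> {1..<L} \<Longrightarrow> bdeg (q i) \<le> bdeg (q (i+1))"
    and nonconst: "\<And>i j. i \<in> {1..L} \<Longrightarrow> j \<in> {1..L} \<Longrightarrow> i \<noteq> j \<Longrightarrow>
                     \<not> bdiff_const (q i) (q j)"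
    and linear: "\<And>i. i \<in> {1..L} \<Longrightarrow> bdeg (q i) = 1 \<Longrightarrow>
                   \<exists>a b :: int. \<forall>x y. beval (q i) x y = of_int a * x + of_int b * y"
    and r0: "0 < r\<^sub>0" "r\<^sub>0 < 1"
    and sep: "\<And>i j. i \<in> {1..L} \<Longrightarrow> j \<in> {1..L} \<Longrightarrow> bdeg (q i) > bdeg (q j) \<Longrightarrow>
               \<forall>\<^sub>F N in sequentially. \<forall>n m :: nat.
                  real N powr r\<^sub>0 \<le> real n \<and> n \<le> N \<and> real N powr r\<^sub>0 \<le> real m \<and> m \<le> N \<longrightarrow>
                  beval (q i) (real n) (real N) - beval (q j) (real m) (real N) \<ge> real N"
  shows "\<exists>r\<^sub>1 c A B (BS :: nat \<Rightarrow> nat set) (l :: (nat \<Rightarrow> nat) \<Rightarrow> nat)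
            (a :: (nat \<Rightarrow> nat) \<Rightarrow> nat \<Rightarrow> real) (b :: (nat \<Rightarrow> nat) \<Rightarrow> nat \<Rightarrow> real).
     0 < r\<^sub>1 \<and> r\<^sub>1 < 1 \<and> c > 0 \<and> A > 0 \<and> B > 0 \<and>
     (\<forall>N::nat. N \<ge> 1 \<longrightarrow>
        {n::nat. 1 \<le> n \<and> real n \<le> real N powr r\<^sub>0} \<subseteq> BS N \<and>
        finite (BS N) \<and> real (card (BS N)) \<le> A * real N powr r\<^sub>1) \<and>
     (\<forall>\<epsilon>. \<epsilon> permutes {1..L} \<longrightarrow>
        (\<forall>j \<in> {1..l \<epsilon>}. 0 \<le> a \<epsilon> j \<and> a \<epsilon> j < b \<epsilon> j \<and> b \<epsilon> j \<le> 1)) \<and>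
     (\<forall>\<epsilon> \<epsilon>' j j'. \<epsilon> permutes {1..L} \<and> \<epsilon>' permutes {1..L} \<and>
        j \<in> {1..l \<epsilon>} \<and> j' \<in> {1..l \<epsilon>'} \<and> (j, \<epsilon>) \<noteq> (j', \<epsilon>') \<longrightarrow>
        {a \<epsilon> j<..<b \<epsilon> j} \<inter> {a \<epsilon>' j'<..<b \<epsilon>' j'} = {}) \<and>
     (let I = (\<lambda>\<epsilon> (N::nat). {n::nat. \<exists>j \<in> {1..l \<epsilon>}.
                  a \<epsilon> j * real N + B * real N powr r\<^sub>1 < real n \<and>
                  real n < b \<epsilon> j * real N - real N powr r\<^sub>1})
      in (\<forall>N::nat. N \<ge> 1 \<longrightarrow>
            (\<forall>\<epsilon> \<epsilon>'. \<epsilon> permutes {1..L} \<and> \<epsilon>' permutes {1..L} \<and> \<epsilon> \<noteq> \<epsilon>' \<longrightarrow>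
                I \<epsilon> N \<inter> I \<epsilon>' N = {}) \<and>
            {1..N} - BS N \<subseteq> (\<Union>\<epsilon> \<in> {\<epsilon>. \<epsilon> permutes {1..L}}. I \<epsilon> N)) \<and>
         (\<forall>\<^sub>F N in sequentially. \<forall>\<epsilon>. \<epsilon> permutes {1..L} \<longrightarrow>
            (\<forall>n \<in> I \<epsilon> N. real n \<ge> real N powr r\<^sub>0 \<longrightarrow>
               (\<forall>i \<in> {1..<L}.
                  beval (q (\<epsilon> i)) (real n) (real N) < beval (q (\<epsilon> (i+1))) (real n) (real N) \<and>
                  (bdeg (q (\<epsilon> i)) = bdeg (q (\<epsilon> (i+1))) \<and> bdeg (q (\<epsilon> i)) > 1 \<longrightarrow>
                    beval (q (\<epsilon> (i+1))) (real n) (real N)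
                      \<ge> beval (q (\<epsilon> i)) (real n) (real N) + c * sqrt (real N))))))"
proof -
  define fq where "fq i n N = beval (q i) (real n) (real N)" for i n N :: nat
  obtain \<rho> Z where "\<rho> < 1" "finite Z" and sep: "\<And>i j. i \<in> {1..L} \<Longrightarrow> j \<in> {1..L} \<Longrightarrow> i \<noteq> j \<Longrightarrow>
      sign_separated_off \<rho> Z (\<lambda>n N. fq j n N - fq i n N)"
    using bipoly_family_sign_separated[of L q, OF poly nonconst] unfolding fq_def by blast
  define r\<^sub>1 where "r\<^sub>1 = max r\<^sub>0 \<rho>"
  have r\<^sub>1: "0 < r\<^sub>1" "r\<^sub>1 < 1" "r\<^sub>0 \<le> r\<^sub>1" "\<rho> \<le> r\<^sub>1"
    using r0 \<open>\<rho> < 1\<close> unfolding r\<^sub>1_def by auto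
  obtain K p where "unit_interval_partition K p" and avoid: "\<And>k. k < K \<Longrightarrow> Z \<inter> {p k<..<p (Suc k)} = {}"
    using obtain_unit_interval_partition[OF \<open>finite Z\<close>] by blast
  interpret unit_interval_partition K p by fact
  define W where "W k = window r\<^sub>1 (p k) (p (Suc k))" for k
  obtain \<sigma>s where \<sigma>s: "\<And>k. k < K \<Longrightarrow> \<sigma>s k permutes {1..L}"
    and sorted: "\<And>k. k < K \<Longrightarrow> \<forall>\<^sub>F N in sequentially. \<forall>n\<in>W k N. \<forall>i\<in>{1..<L}.
        sqrt (real N) \<le> fq (\<sigma>s k (i + 1)) n N - fq (\<sigma>s k i) n N"
    using sorting_permutations[of L \<rho> Z fq r\<^sub>1, OF sep avoid] r\<^sub>1 unfolding W_def by auto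
  obtain l :: "(nat \<Rightarrow> nat) \<Rightarrow> nat" and e
    where e: "\<And>\<epsilon> j. j \<in> {1..l \<epsilon>} \<Longrightarrow> e \<epsilon> j < K \<and> \<sigma>s (e \<epsilon> j) = \<epsilon>"
      and e_inj: "\<And>\<epsilon>. inj_on (e \<epsilon>) {1..l \<epsilon>}"
      and e_onto: "\<And>k. k < K \<Longrightarrow> \<exists>j\<in>{1..l (\<sigma>s k)}. e (\<sigma>s k) j = k"
    using enumerate_fibres[of K \<sigma>s] by blast
  \<comment> \<open>The intervals (a \<epsilon> j, b \<epsilon> j) are the pieces of the partition on which \<epsilon> sorts the q i.\<close>
  define a where "a \<epsilon> j = p (e \<epsilon> j)" for \<epsilon> j
  define b where "b \<epsilon> j = p (Suc (e \<epsilon> j))" for \<epsilon> j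
  define I where "I \<epsilon> N = {n. \<exists>j\<in>{1..l \<epsilon>}.
    a \<epsilon> j * real N + 1 * real N powr r\<^sub>1 < real n \<and> real n < b \<epsilon> j * real N - real N powr r\<^sub>1}" for \<epsilon> N
  define BS where "BS N = {1..N} - (\<Union>k<K. W k N)" for N
  have I_eq: "I \<epsilon> N = (\<Union>k\<in>{k. k < K \<and> \<sigma>s k = \<epsilon>}. W k N)" for \<epsilon> N
  proof -
    have "I \<epsilon> N = (\<Union>j\<in>{1..l \<epsilon>}. W (e \<epsilon> j) N)"
      unfolding I_def a_def b_def W_def window_def by auto
    also have "\<dots> = (\<Union>k\<in>{k. k < K \<and> \<sigma>s k = \<epsilon>}. W k N)"
    proof (rule SUP_eq)
      show "\<exists>k\<in>{k. k < K \<and> \<sigma>s k = \<epsilon>}. W (e \<epsilon> j) N \<le> W k N" if "j \<in> {1..l \<epsilon>}" for j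
        using e[OF that] by auto
      show "\<exists>j\<in>{1..l \<epsilon>}. W k N \<le> W (e \<epsilon> j) N" if "k \<in> {k. k < K \<and> \<sigma>s k = \<epsilon>}" for k
        using e_onto[of k] that by force
    qed
    finally show ?thesis .
  qed
  have BS: "{n. 1 \<le> n \<and> real n \<le> real N powr r\<^sub>0} \<subseteq> BS N" "finite (BS N)"
    "real (card (BS N)) \<le> 3 * real (K + 1) * real N powr r\<^sub>1" if "1 \<le> N" for N
    unfolding BS_def W_def using small_points_uncovered card_uncovered_le that r0 r\<^sub>1 by auto
  have ab: "0 \<le> a \<epsilon> j" "a \<epsilon> j < b \<epsilon> j" "b \<epsilon> j \<le> 1" if "j \<in> {1..l \<epsilon>}" for \<epsilon> j
    unfolding a_def b_def using e[OF that] p_bounds p_less_Suc by (auto simp: Suc_leI)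
  have ab_disjoint: "{a \<epsilon> j<..<b \<epsilon> j} \<inter> {a \<epsilon>' j'<..<b \<epsilon>' j'} = {}"
    if "j \<in> {1..l \<epsilon>}" "j' \<in> {1..l \<epsilon>'}" "(j, \<epsilon>) \<noteq> (j', \<epsilon>')" for \<epsilon> \<epsilon>' j j'
  proof -
    have "e \<epsilon> j \<noteq> e \<epsilon>' j'"
    proof (cases "\<epsilon> = \<epsilon>'")
      case True
      then show ?thesis
        using e_inj[of \<epsilon>] that by (auto simp: inj_on_eq_iff)
    next
      case False
      then show ?thesis
        using e[OF that(1)] e[OF that(2)] by metis
    qed
    then show ?thesis
      unfolding a_def b_def using e[OF that(1)] e[OF that(2)] by (intro intervals_disjoint) auto
  qed
  have I_disjoint: "I \<epsilon> N \<inter> I \<epsilon>' N = {}" if "\<epsilon> \<noteq> \<epsilon>'" for \<epsilon> \<epsilon>' N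
    unfolding I_eq W_def using windows_disjoint that by blast
  have I_cover: "{1..N} - BS N \<subseteq> (\<Union>\<epsilon>\<in>{\<epsilon>. \<epsilon> permutes {1..L}}. I \<epsilon> N)" for N
    unfolding I_eq BS_def using \<sigma>s by blast
  have "\<forall>\<^sub>F N in sequentially. \<forall>k\<in>{..<K}. \<forall>n\<in>W k N. \<forall>i\<in>{1..<L}.
      sqrt (real N) \<le> fq (\<sigma>s k (i + 1)) n N - fq (\<sigma>s k i) n N"
    using sorted by (intro eventually_ball_finite) auto
  then have ordered: "\<forall>\<^sub>F N in sequentially. \<forall>\<epsilon>. \<epsilon> permutes {1..L} \<longrightarrow>
      (\<forall>n\<in>I \<epsilon> N. real N powr r\<^sub>0 \<le> real n \<longrightarrow> (\<forall>i\<in>{1..<L}.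
        fq (\<epsilon> i) n N < fq (\<epsilon> (i + 1)) n N \<and>
        (bdeg (q (\<epsilon> i)) = bdeg (q (\<epsilon> (i + 1))) \<and> 1 < bdeg (q (\<epsilon> i)) \<longrightarrow>
          fq (\<epsilon> i) n N + 1 * sqrt (real N) \<le> fq (\<epsilon> (i + 1)) n N)))"
  proof (rule eventually_mono[OF eventually_conj[OF _ eventually_gt_at_top[of 0]]], unfold I_eq, safe)
    fix N n k i
    assume "\<forall>k\<in>{..<K}. \<forall>n\<in>W k N. \<forall>i\<in>{1..<L}. sqrt (real N) \<le> fq (\<sigma>s k (i + 1)) n N - fq (\<sigma>s k i) n N"
      and "0 < N" "k < K" "n \<in> W k N" "i \<in> {1..<L}"
    then have "sqrt (real N) \<le> fq (\<sigma>s k (i + 1)) n N - fq (\<sigma>s k i) n N" "0 < sqrt (real N)"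
      by auto
    then show "fq (\<sigma>s k i) n N < fq (\<sigma>s k (i + 1)) n N"
      "fq (\<sigma>s k i) n N + 1 * sqrt (real N) \<le> fq (\<sigma>s k (i + 1)) n N"
      by linarith+
  qed
  show ?thesis
  proof (rule exI[of _ r\<^sub>1], rule exI[of _ 1], rule exI[of _ "3 * real (K + 1)"], rule exI[of _ 1],
      rule exI[of _ BS], rule exI[of _ l], rule exI[of _ a], rule exI[of _ b],
      unfold Let_def I_def[symmetric] fq_def[symmetric], intro conjI allI impI ballI)
    fix \<epsilon> \<epsilon>' :: "nat \<Rightarrow> nat" and j j' :: nat
    assume "\<epsilon> permutes {1..L} \<and> \<epsilon>' permutes {1..L} \<and> j \<in> {1..l \<epsilon>} \<and> j' \<in> {1..l \<epsilon>'} \<and> (j, \<epsilon>) \<noteq> (j', \<epsilon>')"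
    then show "{a \<epsilon> j<..<b \<epsilon> j} \<inter> {a \<epsilon>' j'<..<b \<epsilon>' j'} = {}"
      using ab_disjoint by blast
  qed (use r\<^sub>1 BS ab I_disjoint I_cover ordered in simp_all)
qed

end
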